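(* Let $(B,\lfloor\cdot,\cdot\rfloor)$ be an SSD space with quadratic form $q$, and let $f:B\to\mathbb{R}\cup\{+\infty\}$ be a minimal element (with respect to the pointwise order) of the set of convex functions $g:B\to\mathbb{R}\cup\{+\infty\}$ satisfying $g\ge q$ on $B$. Then $f^{@}\ge f$ on $B$.
   Context: An SSD space is a pair $(B,\lfloor\cdot,\cdot\rfloor)$ with $B$ a nonzero real vector space and $\lfloor\cdot,\cdot\rfloor$ a symmetric bilinear form; $q(b)=\frac12\lfloor b,b\rfloor$. For $f:B\to\mathbb{R}\cup\{+\infty\}$, $f^{@}(b)=\sup_{c\in B}\{\lfloor c,b\rfloor-f(c)\}$. *)

theory Defs
  imports "HOL-Analysis.Analysis" "HOL-Library.Extended_Real"
begin

definition SSD_space :: "('b::real_vector \<Rightarrow> 'b \<Rightarrow> real) \<Rightarrow> bool" where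
  "SSD_space bf \<longleftrightarrow> (\<exists>x::'b. x \<noteq> 0) \<and> bilinear bf \<and> (\<forall>x y. bf x y = bf y x)"

definition ssd_q :: "('b::real_vector \<Rightarrow> 'b \<Rightarrow> real) \<Rightarrow> 'b \<Rightarrow> real" where
  "ssd_q bf b = bf b b / 2"

definition ext_convex :: "('b::real_vector \<Rightarrow> ereal) \<Rightarrow> bool" where
  "ext_convex g \<longleftrightarrow> (\<forall>x. g x \<noteq> -\<infinity>) \<and>
     (\<forall>x y t. 0 < t \<and> t < 1 \<longrightarrow>
        g ((1 - t) *\<^sub>R x + t *\<^sub>R y) \<le> ereal (1 - t) * g x + ereal t * g y)"

definition ssd_conj :: "('b::real_vector \<Rightarrow> 'b \<Rightarrow> real) \<Rightarrow> ('b \<Rightarrow> ereal) \<Rightarrow> 'b \<Rightarrow> ereal" where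
  "ssd_conj bf f b = (SUP c. ereal (bf c b) - f c)"

definition convex_majorants_q :: "('b::real_vector \<Rightarrow> 'b \<Rightarrow> real) \<Rightarrow> ('b \<Rightarrow> ereal) set" where
  "convex_majorants_q bf = {g. ext_convex g \<and> (\<forall>b. ereal (ssd_q bf b) \<le> g b)}"

end

theory Submission
  imports Defs
begin

text \<open>
  Suppose \<open>f\<^sup>@(b) \<le> r\<close> and \<open>q(b) \<le> r\<close> for a real \<open>r\<close>. Adjoin the point \<open>(b, r)\<close> to the epigraph
  of \<open>f\<close> and take the lower envelope \<open>g\<close> of the convex hull. Then \<open>g\<close> is convex and \<open>g \<le> f\<close>,
  and \<open>g \<ge> q\<close>: on the segment from \<open>(b, r)\<close> to an epigraph point \<open>(d, y)\<close>, the quadratic form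
  is controlled by \<open>q(b) \<le> r\<close>, \<open>q(d) \<le> y\<close> and \<open>\<lfloor>d, b\<rfloor> \<le> y + r\<close>, the last being
  \<open>f\<^sup>@(b) \<le> r\<close>. By minimality \<open>g = f\<close>, so \<open>f(b) \<le> r\<close>. Hence \<open>f(b) \<le> max (q(b)) (f\<^sup>@(b))\<close>,
  and if \<open>f(b) = q(b)\<close> then already \<open>f\<^sup>@(b) \<ge> \<lfloor>b, b\<rfloor> - q(b) = f(b)\<close>.
\<close>

definition ext_epigraph :: "('b \<Rightarrow> ereal) \<Rightarrow> ('b \<times> real) set" where
  "ext_epigraph f = {(d, y). f d \<le> ereal y}"

definition lower_envelope :: "('b \<times> real) set \<Rightarrow> 'b \<Rightarrow> ereal" where
  "lower_envelope S c = (INF y\<in>{y. (c, y) \<in> S}. ereal y)"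

lemma convex_ext_epigraph:
  fixes f :: "'b::real_vector \<Rightarrow> ereal"
  assumes "ext_convex f"
  shows "convex (ext_epigraph f)"
proof (rule convexI)
  fix x y :: "'b \<times> real" and u v :: real
  assume "x \<in> ext_epigraph f" "y \<in> ext_epigraph f" and u: "0 \<le> u" and v: "0 \<le> v"
    and uv: "u + v = 1"
  then obtain d1 y1 d2 y2 where x: "x = (d1, y1)" "f d1 \<le> ereal y1"
    and y: "y = (d2, y2)" "f d2 \<le> ereal y2"
    unfolding ext_epigraph_def by auto
  show "u *\<^sub>R x + v *\<^sub>R y \<in> ext_epigraph f"
  proof (cases "v = 0 \<or> v = 1")
    case True
    then show ?thesis using x y uv unfolding ext_epigraph_def by auto
  next
    case False
    then have v01: "0 < v" "v < 1" using v uv u by auto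
    have "f ((1 - v) *\<^sub>R d1 + v *\<^sub>R d2) \<le> ereal (1 - v) * f d1 + ereal v * f d2"
      using assms v01 unfolding ext_convex_def by blast
    also have "\<dots> \<le> ereal (1 - v) * ereal y1 + ereal v * ereal y2"
      using v01 x y by (intro add_mono ereal_mult_left_mono) auto
    finally have "f ((1 - v) *\<^sub>R d1 + v *\<^sub>R d2) \<le> ereal ((1 - v) * y1 + v * y2)" by simp
    moreover have "u = 1 - v" using uv by simp
    ultimately show ?thesis using x y unfolding ext_epigraph_def by simp
  qed
qed

lemma lower_envelope_le:
  "(c, y) \<in> S \<Longrightarrow> lower_envelope S c \<le> ereal y"
  unfolding lower_envelope_def by (rule INF_lower) simp

lemma lower_envelope_greatest:
  "(\<And>y. (c, y) \<in> S \<Longrightarrow> a \<le> ereal y) \<Longrightarrow> a \<le> lower_envelope S c"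
  unfolding lower_envelope_def by (rule INF_greatest) simp

lemma lower_envelope_le_of_epigraph_subset:
  assumes "ext_epigraph f \<subseteq> S"
  shows "lower_envelope S c \<le> f c"
proof (rule ereal_le_real)
  fix z assume "f c \<le> ereal z"
  then have "(c, z) \<in> S" using assms unfolding ext_epigraph_def by blast
  then show "lower_envelope S c \<le> ereal z" by (rule lower_envelope_le)
qed

lemma ext_convex_lower_envelope:
  fixes S :: "('b::real_vector \<times> real) set"
  assumes "convex S" and finite: "\<And>c. lower_envelope S c \<noteq> -\<infinity>"
  shows "ext_convex (lower_envelope S)"
  unfolding ext_convex_def
proof (intro conjI allI impI finite)
  fix x y :: 'b and t :: real
  assume t: "0 < t \<and> t < 1"
  let ?g = "lower_envelope S"
  show "?g ((1 - t) *\<^sub>R x + t *\<^sub>R y) \<le> ereal (1 - t) * ?g x + ereal t * ?g y"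
  proof (cases "?g x = \<infinity> \<or> ?g y = \<infinity>")
    case True
    have infinite: "ereal (1 - t) * ?g x + ereal t * ?g y = \<infinity>"
      using True t finite[of x] finite[of y] by (cases "?g x"; cases "?g y") auto
    show ?thesis unfolding infinite by (rule ereal_less_eq(1))
  next
    case False
    then obtain a c where a: "?g x = ereal a" and c: "?g y = ereal c"
      using finite[of x] finite[of y] by (cases "?g x"; cases "?g y") auto
    show ?thesis
    proof (rule ereal_le_epsilon2)
      fix e :: real assume "0 < e"
      then have "?g x < ereal (a + e)" "?g y < ereal (c + e)" using a c by simp_all
      then obtain a' c' where a': "(x, a') \<in> S" "a' < a + e" and c': "(y, c') \<in> S" "c' < c + e"
        unfolding lower_envelope_def INF_less_iff by auto
      have "(1 - t) *\<^sub>R (x, a') + t *\<^sub>R (y, c') \<in> S"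
        using \<open>convex S\<close> a'(1) c'(1) t by (intro convexD) auto
      then have "?g ((1 - t) *\<^sub>R x + t *\<^sub>R y) \<le> ereal ((1 - t) * a' + t * c')"
        by (intro lower_envelope_le) simp
      also have "\<dots> \<le> ereal ((1 - t) * (a + e) + t * (c + e))"
        using a'(2) c'(2) t by (simp add: add_mono mult_left_mono)
      also have "\<dots> = ereal (1 - t) * ?g x + ereal t * ?g y + ereal e"
        using a c by (simp add: algebra_simps)
      finally show "?g ((1 - t) *\<^sub>R x + t *\<^sub>R y) \<le> ereal (1 - t) * ?g x + ereal t * ?g y + ereal e" .
    qed
  qed
qed

lemma ssd_q_segment:
  assumes "bilinear bf" "\<forall>x y. bf x y = bf y x"
  shows "ssd_q bf ((1 - u) *\<^sub>R b + u *\<^sub>R d)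
     = (1 - u)\<^sup>2 * ssd_q bf b + u * (1 - u) * bf d b + u\<^sup>2 * ssd_q bf d"
proof -
  have sym: "bf b d = bf d b" using assms(2) by blast
  show ?thesis
    unfolding ssd_q_def
    by (simp only: bilinear_ladd[OF assms(1)] bilinear_radd[OF assms(1)]
      bilinear_lmul[OF assms(1)] bilinear_rmul[OF assms(1)] real_scaleR_def sym)
       (simp add: power2_eq_square field_simps)
qed

lemma ssd_q_segment_le:
  assumes "bilinear bf" "\<forall>x y. bf x y = bf y x" "0 \<le> u" "u \<le> 1"
    and "ssd_q bf b \<le> r" "ssd_q bf d \<le> y" "bf d b \<le> y + r"
  shows "ssd_q bf ((1 - u) *\<^sub>R b + u *\<^sub>R d) \<le> (1 - u) * r + u * y"
proof -
  have "(1 - u)\<^sup>2 * ssd_q bf b + u * (1 - u) * bf d b + u\<^sup>2 * ssd_q bf d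
      \<le> (1 - u)\<^sup>2 * r + u * (1 - u) * (y + r) + u\<^sup>2 * y"
    using assms by (intro add_mono mult_left_mono) auto
  also have "\<dots> = (1 - u) * r + u * y" by (simp add: power2_eq_square algebra_simps)
  finally show ?thesis unfolding ssd_q_segment[OF assms(1,2)] .
qed

lemma ssd_q_le_on_convex_hull_insert:
  fixes E :: "('b::real_vector \<times> real) set"
  assumes "bilinear bf" "\<forall>x y. bf x y = bf y x" "convex E" "ssd_q bf b \<le> r"
    and E: "\<And>d y. (d, y) \<in> E \<Longrightarrow> ssd_q bf d \<le> y \<and> bf d b \<le> y + r"
    and cy: "(c, y) \<in> convex hull (insert (b, r) E)"
  shows "ssd_q bf c \<le> y"
proof (cases "E = {}")
  case True
  then show ?thesis using cy \<open>ssd_q bf b \<le> r\<close> by simp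
next
  case False
  then obtain d y0 u where "(c, y) = (1 - u) *\<^sub>R (b, r) + u *\<^sub>R (d, y0)"
      and u: "0 \<le> u" "u \<le> 1" and dy0: "(d, y0) \<in> E"
    using cy unfolding convex_hull_insert_alt convex_hull_eq[THEN iffD2, OF \<open>convex E\<close>] by auto
  then have "c = (1 - u) *\<^sub>R b + u *\<^sub>R d" "y = (1 - u) * r + u * y0" by auto
  moreover have "ssd_q bf ((1 - u) *\<^sub>R b + u *\<^sub>R d) \<le> (1 - u) * r + u * y0"
    using E[OF dy0] by (intro ssd_q_segment_le[OF assms(1,2) u assms(4)]) auto
  ultimately show ?thesis by simp
qed

lemma ssd_conj_ge: "ereal (bf c b) - f c \<le> ssd_conj bf f b"
  unfolding ssd_conj_def by (rule SUP_upper) simp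

lemma minimal_convex_majorant_le:
  fixes f :: "'b::real_vector \<Rightarrow> ereal"
  assumes bil: "bilinear bf" and sym: "\<forall>x y. bf x y = bf y x"
    and f: "f \<in> convex_majorants_q bf"
    and minimal: "\<forall>g \<in> convex_majorants_q bf. g \<le> f \<longrightarrow> g = f"
    and rq: "ssd_q bf b \<le> r" and rc: "ssd_conj bf f b \<le> ereal r"
  shows "f b \<le> ereal r"
proof -
  have fconv: "ext_convex f" and fq: "\<And>c. ereal (ssd_q bf c) \<le> f c"
    using f unfolding convex_majorants_q_def by auto
  define S where "S = convex hull (insert (b, r) (ext_epigraph f))"
  have epigraph: "ssd_q bf d \<le> y \<and> bf d b \<le> y + r" if "(d, y) \<in> ext_epigraph f" for d y
  proof
    have fd: "f d \<le> ereal y" using that unfolding ext_epigraph_def by simp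
    show "ssd_q bf d \<le> y" using order_trans[OF fq fd] by simp
    have "ereal (bf d b) - ereal y \<le> ereal (bf d b) - f d"
      using fd by (intro ereal_minus_mono) auto
    also have "\<dots> \<le> ereal r" using ssd_conj_ge rc by (rule order_trans)
    finally show "bf d b \<le> y + r" by simp
  qed
  have q_le: "ereal (ssd_q bf c) \<le> lower_envelope S c" for c
    using ssd_q_le_on_convex_hull_insert[OF bil sym convex_ext_epigraph[OF fconv] rq epigraph]
    unfolding S_def by (intro lower_envelope_greatest) simp
  have "lower_envelope S c \<noteq> -\<infinity>" for c
    using q_le[of c] by auto
  then have "ext_convex (lower_envelope S)"
    unfolding S_def by (rule ext_convex_lower_envelope[OF convex_convex_hull])
  moreover have "ext_epigraph f \<subseteq> S"
    unfolding S_def by (rule subset_trans[OF subset_insertI hull_subset])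
  then have "lower_envelope S \<le> f"
    by (simp add: le_fun_def lower_envelope_le_of_epigraph_subset)
  ultimately have "lower_envelope S = f" using minimal q_le unfolding convex_majorants_q_def by blast
  moreover have "lower_envelope S b \<le> ereal r" unfolding S_def by (intro lower_envelope_le hull_inc) simp
  ultimately show ?thesis by simp
qed

theorem mainTheorem13:
  fixes bf :: "'b::real_vector \<Rightarrow> 'b \<Rightarrow> real" and f :: "'b \<Rightarrow> ereal"
  assumes "SSD_space bf"
    and "f \<in> convex_majorants_q bf"
    and "\<forall>g \<in> convex_majorants_q bf. g \<le> f \<longrightarrow> g = f"
  shows "\<forall>b. f b \<le> ssd_conj bf f b"
proof
  fix b
  have bil: "bilinear bf" and sym: "\<forall>x y. bf x y = bf y x"
    using assms(1) unfolding SSD_space_def by auto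
  have max: "f b \<le> max (ereal (ssd_q bf b)) (ssd_conj bf f b)"
  proof (rule ereal_le_real)
    fix r assume "max (ereal (ssd_q bf b)) (ssd_conj bf f b) \<le> ereal r"
    then show "f b \<le> ereal r" by (intro minimal_convex_majorant_le[OF bil sym assms(2,3)]) auto
  qed
  show "f b \<le> ssd_conj bf f b"
  proof (cases "f b \<le> ssd_conj bf f b")
    case False
    then have "f b \<le> ereal (ssd_q bf b)" using max by (simp add: le_max_iff_disj)
    moreover have "ereal (ssd_q bf b) \<le> f b" using assms(2) unfolding convex_majorants_q_def by blast
    ultimately have "f b = ereal (ssd_q bf b)" by (rule antisym)
    then have "ereal (bf b b) - f b = f b" unfolding ssd_q_def by simp
    then show ?thesis using ssd_conj_ge[of bf b b f] by simp
  qed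
qed

end
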